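(* For all integers $n\ge0$, $$r_{2n}(s,q)=\sum_{k=0}^n(-q;q)_k\,q^{\binom{k}{2}}s^k\begin{bmatrix} n\\ k\end{bmatrix}_{q^2}r_{n-k}(s^2,q^2),$$ $$r_{2n+1}(s,q)=(1+s)\sum_{k=0}^n(-q;q)_k\,q^{\binom{k+1}{2}}s^k\begin{bmatrix} n\\ k\end{bmatrix}_{q^2}r_{n-k}(s^2,q^2).$$
   Context: $q$ is an indeterminate. $(x;q)_n=\prod_{j=0}^{n-1}(1-q^jx)$. The Gaussian binomial coefficient is $\begin{bmatrix} n\\ j\end{bmatrix}_q=\frac{(q;q)_n}{(q;q)_j(q;q)_{n-j}}$ for $0\le j\le n$ and $0$ otherwise. The Rogers–Szegö polynomials are $r_n(s,q)=\sum_{j=0}^n\begin{bmatrix} n\\ j\end{bmatrix}_q s^j$. *)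

theory Defs
  imports "HOL-Computational_Algebra.Polynomial" "HOL-Computational_Algebra.Fraction_Field"
begin

definition qpoch :: "'a::comm_ring_1 \<Rightarrow> 'a \<Rightarrow> nat \<Rightarrow> 'a" where
  "qpoch x q n = (\<Prod>j<n. 1 - q ^ j * x)"

definition qbinom :: "'a::field \<Rightarrow> nat \<Rightarrow> nat \<Rightarrow> 'a" where
  "qbinom q n j = (if j \<le> n then qpoch q q n / (qpoch q q j * qpoch q q (n - j)) else 0)"

definition rsz :: "nat \<Rightarrow> 'a::field \<Rightarrow> 'a \<Rightarrow> 'a" where
  "rsz n s q = (\<Sum>j=0..n. qbinom q n j * s ^ j)"

definition qind :: "'a::idom poly fract" where
  "qind = Fract [:0, 1:] 1"

end

theory Submission
  imports Defs
begin

text \<open>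
  Two recurrences of the Rogers-Szego polynomials drive the proof:
  r(m+1, s) = s r(m, s) + r(m, qs)  and  r(m, qt) = r(m, t) - (1 - q^m) t r(m-1, t).
  Writing E(n, s) and O(n, s) for the two sums on the right-hand sides (without the
  factor 1 + s), the first recurrence reduces the theorem, by induction on n, to
    s E(n, s) + E(n, qs) = (1 + s) O(n, s)  and
    s (1 + s) O(n, s) + (1 + qs) O(n, qs) = E(n+1, s).
  Both are checked term by term: the second recurrence, with base q^2 and argument s^2,
  expands r(n-k, q^2 s^2) in base q^2, and the error terms telescope because the
  coefficients c(n, k) = (-q;q)_k q^(k choose 2) [n, k]_(q^2) satisfy
  (1 - q^(k+1)) c(n, k+1) = q^k (1 - q^(2(n-k))) c(n, k).

  Since the Gaussian binomial is defined as a quotient of q-Pochhammer symbols, the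
  q-binomial identities need (q;q)_m to be nonzero, i.e. q not a root of unity;
  the indeterminate is not one.
\<close>

lemma qpoch_Suc: "qpoch x q (Suc n) = qpoch x q n * (1 - q ^ n * x)"
  by (simp add: qpoch_def)

lemma qpoch_self_Suc: "qpoch q q (Suc n) = qpoch q q n * (1 - q ^ Suc n)"
  by (simp add: qpoch_def mult.commute)

lemma qpoch_self_nonzero:
  fixes q :: "'a::field"
  assumes "\<And>j. 0 < j \<Longrightarrow> q ^ j \<noteq> 1"
  shows "qpoch q q n \<noteq> 0"
  using assms[of "Suc _"] by (simp add: qpoch_def mult.commute)

lemma qbinom_eq_0: "n < k \<Longrightarrow> qbinom q n k = 0"
  by (simp add: qbinom_def)

lemma qbinom_0:
  fixes q :: "'a::field"
  assumes "\<And>j. 0 < j \<Longrightarrow> q ^ j \<noteq> 1"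
  shows "qbinom q n 0 = 1"
  using qpoch_self_nonzero[OF assms, of n] by (simp add: qbinom_def qpoch_def)

lemma qbinom_Suc_right:
  fixes q :: "'a::field"
  assumes nz: "\<And>j. 0 < j \<Longrightarrow> q ^ j \<noteq> 1"
  shows "(1 - q ^ Suc k) * qbinom q n (Suc k) = (1 - q ^ (n - k)) * qbinom q n k"
proof (cases "k < n")
  case True
  then obtain m where m: "n - k = Suc m" "n - Suc k = m" by (metis Suc_diff_Suc diff_Suc_1)
  have "1 - q ^ Suc k \<noteq> 0" "1 - q ^ Suc m \<noteq> 0" using nz[of "Suc k"] nz[of "Suc m"] by auto
  with True qpoch_self_nonzero[OF nz] show ?thesis
    unfolding qbinom_def m by (simp add: qpoch_self_Suc field_simps)
next
  case False
  then show ?thesis by (cases "k = n") (simp_all add: qbinom_def)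
qed

lemma qbinom_Suc_Suc_absorb:
  fixes q :: "'a::field"
  assumes nz: "\<And>j. 0 < j \<Longrightarrow> q ^ j \<noteq> 1"
  shows "(1 - q ^ Suc k) * qbinom q (Suc n) (Suc k) = (1 - q ^ Suc n) * qbinom q n k"
proof (cases "k \<le> n")
  case True
  have "1 - q ^ Suc k \<noteq> 0" using nz[of "Suc k"] by auto
  with True qpoch_self_nonzero[OF nz] show ?thesis
    unfolding qbinom_def by (simp add: Suc_diff_le qpoch_self_Suc field_simps)
qed (simp add: qbinom_def)

lemma qbinom_Suc_Suc:
  fixes q :: "'a::field"
  assumes nz: "\<And>j. 0 < j \<Longrightarrow> q ^ j \<noteq> 1"
  shows "qbinom q (Suc n) (Suc k) = qbinom q n k + q ^ Suc k * qbinom q n (Suc k)"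
proof (cases "k \<le> n")
  case True
  have "(1 - q ^ Suc k) * qbinom q (Suc n) (Suc k) = (1 - q ^ Suc k * q ^ (n - k)) * qbinom q n k"
    using True by (simp only: qbinom_Suc_Suc_absorb[OF nz] flip: power_add) simp
  also have "\<dots> = (1 - q ^ Suc k) * qbinom q n k + q ^ Suc k * ((1 - q ^ (n - k)) * qbinom q n k)"
    by (simp add: algebra_simps)
  also have "\<dots> = (1 - q ^ Suc k) * (qbinom q n k + q ^ Suc k * qbinom q n (Suc k))"
    by (simp only: qbinom_Suc_right[OF nz, symmetric]) (simp add: algebra_simps)
  finally show ?thesis
    using nz[of "Suc k"] by simp
qed (simp add: qbinom_def)

lemma rsz_0: "rsz 0 s q = 1"
  by (simp add: rsz_def qbinom_def qpoch_def)

lemma rsz_eq_1_plus_sum: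
  fixes q :: "'a::field"
  assumes "\<And>j. 0 < j \<Longrightarrow> q ^ j \<noteq> 1"
  shows "rsz m s q = 1 + (\<Sum>j<m. qbinom q m (Suc j) * s ^ Suc j)"
  unfolding rsz_def atLeast0AtMost
  by (simp add: qbinom_0[OF assms] sum.atMost_shift)

lemma rsz_Suc:
  fixes q :: "'a::field"
  assumes nz: "\<And>j. 0 < j \<Longrightarrow> q ^ j \<noteq> 1"
  shows "rsz (Suc m) s q = s * rsz m s q + rsz m (q * s) q"
proof -
  have "rsz (Suc m) s q = 1 + (\<Sum>j\<le>m. s * (qbinom q m j * s ^ j) + qbinom q m (Suc j) * (q * s) ^ Suc j)"
    by (simp add: rsz_eq_1_plus_sum[OF nz] lessThan_Suc_atMost qbinom_Suc_Suc[OF nz]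
        algebra_simps power_mult_distrib)
  also have "\<dots> = s * rsz m s q + (1 + (\<Sum>j\<le>m. qbinom q m (Suc j) * (q * s) ^ Suc j))"
    by (simp add: rsz_def atLeast0AtMost sum.distrib sum_distrib_left)
  also have "1 + (\<Sum>j\<le>m. qbinom q m (Suc j) * (q * s) ^ Suc j) = rsz m (q * s) q"
    by (simp add: rsz_eq_1_plus_sum[OF nz] lessThan_Suc_atMost[symmetric] qbinom_eq_0)
  finally show ?thesis .
qed

lemma rsz_dilate:
  fixes q :: "'a::field"
  assumes nz: "\<And>j. 0 < j \<Longrightarrow> q ^ j \<noteq> 1"
  shows "rsz m (q * t) q = rsz m t q - (1 - q ^ m) * t * rsz (m - 1) t q"
proof (cases m)
  case 0
  then show ?thesis by (simp add: rsz_0)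
next
  case (Suc m')
  have "rsz m t q - rsz m (q * t) q = (\<Sum>j\<le>m'. (1 - q ^ Suc j) * qbinom q m (Suc j) * t ^ Suc j)"
    by (simp add: rsz_eq_1_plus_sum[OF nz] Suc lessThan_Suc_atMost power_mult_distrib
        sum_subtractf[symmetric] algebra_simps)
  also have "\<dots> = (\<Sum>j\<le>m'. (1 - q ^ m) * t * (qbinom q m' j * t ^ j))"
    by (simp only: Suc qbinom_Suc_Suc_absorb[OF nz]) (simp add: algebra_simps)
  also have "\<dots> = (1 - q ^ m) * t * rsz (m - 1) t q"
    by (simp add: Suc rsz_def atLeast0AtMost sum_distrib_left)
  finally show ?thesis by (simp add: algebra_simps)
qed

lemma rsz_Suc_three_term:
  fixes q :: "'a::field"
  assumes "\<And>j. 0 < j \<Longrightarrow> q ^ j \<noteq> 1"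
  shows "rsz (Suc m) t q = (1 + t) * rsz m t q - (1 - q ^ m) * t * rsz (m - 1) t q"
  using rsz_Suc[OF assms, of m t] rsz_dilate[OF assms, of m t] by (simp add: algebra_simps)

lemma choose2_Suc: "Suc k choose 2 = (k choose 2) + k"
  using binomial_Suc_Suc[of k 1] by (simp add: numeral_2_eq_2)

lemma sum_add_telescope_vanishing:
  fixes g :: "nat \<Rightarrow> 'a::ab_group_add"
  assumes "g 0 = 0" and "g (Suc n) = 0"
  shows "(\<Sum>k\<le>n. f k + (g k - g (Suc k))) = (\<Sum>k\<le>n. f k)"
  using assms by (simp add: sum.distrib sum_telescope)

lemma power2_power: "((x::'a::comm_monoid_mult) ^ 2) ^ j = x ^ j * x ^ j"
  by (simp add: power_mult_distrib[symmetric] power2_eq_square)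

definition bisection_coeff :: "'a::field \<Rightarrow> nat \<Rightarrow> nat \<Rightarrow> 'a" where
  "bisection_coeff q n k = qpoch (- q) q k * q ^ (k choose 2) * qbinom (q ^ 2) n k"

definition even_bisection :: "'a::field \<Rightarrow> nat \<Rightarrow> 'a \<Rightarrow> 'a" where
  "even_bisection q n s = (\<Sum>k\<le>n. bisection_coeff q n k * s ^ k * rsz (n - k) (s ^ 2) (q ^ 2))"

definition odd_bisection :: "'a::field \<Rightarrow> nat \<Rightarrow> 'a \<Rightarrow> 'a" where
  "odd_bisection q n s = (\<Sum>k\<le>n. q ^ k * bisection_coeff q n k * s ^ k * rsz (n - k) (s ^ 2) (q ^ 2))"

context
  fixes q :: "'a::field"
  assumes q_not_root_of_unity: "\<And>j. 0 < j \<Longrightarrow> q ^ j \<noteq> 1"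
begin

lemma square_not_root_of_unity: "0 < j \<Longrightarrow> (q ^ 2) ^ j \<noteq> 1"
  using q_not_root_of_unity[of "2 * j"] by (simp add: power_mult)

lemma rsz_square_dilate:
  "rsz m ((q * s) ^ 2) (q ^ 2) = rsz m (s ^ 2) (q ^ 2) - (1 - (q ^ 2) ^ m) * s ^ 2 * rsz (m - 1) (s ^ 2) (q ^ 2)"
  unfolding power_mult_distrib by (rule rsz_dilate[OF square_not_root_of_unity])

lemma bisection_coeff_0: "bisection_coeff q n 0 = 1"
  by (simp add: bisection_coeff_def qpoch_def qbinom_0[OF square_not_root_of_unity] binomial_eq_0)

lemma bisection_coeff_eq_0: "n < k \<Longrightarrow> bisection_coeff q n k = 0"
  by (simp add: bisection_coeff_def qbinom_eq_0)

lemma bisection_coeff_Suc_right: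
  "(1 - q ^ Suc k) * bisection_coeff q n (Suc k) = q ^ k * bisection_coeff q n k * (1 - (q ^ 2) ^ (n - k))"
proof -
  have "(1 - q ^ Suc k) * bisection_coeff q n (Suc k)
      = qpoch (- q) q k * q ^ (k choose 2) * q ^ k * ((1 - (q ^ 2) ^ Suc k) * qbinom (q ^ 2) n (Suc k))"
    unfolding bisection_coeff_def qpoch_Suc choose2_Suc power_add power2_power[of q "Suc k"]
    by (simp add: algebra_simps)
  also have "\<dots> = qpoch (- q) q k * q ^ (k choose 2) * q ^ k * ((1 - (q ^ 2) ^ (n - k)) * qbinom (q ^ 2) n k)"
    by (simp only: qbinom_Suc_right[OF square_not_root_of_unity])
  finally show ?thesis by (simp add: bisection_coeff_def algebra_simps)
qed

lemma bisection_coeff_Suc_Suc: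
  "bisection_coeff q (Suc n) (Suc k)
     = (q ^ 2) ^ Suc k * bisection_coeff q n (Suc k) + (1 + q ^ Suc k) * q ^ k * bisection_coeff q n k"
  by (simp add: bisection_coeff_def qpoch_Suc choose2_Suc power_add
      qbinom_Suc_Suc[OF square_not_root_of_unity] algebra_simps)

lemma even_bisection_shift:
  "s * even_bisection q n s + even_bisection q n (q * s) = (1 + s) * odd_bisection q n s"
proof -
  define R where "R m = rsz m (s ^ 2) (q ^ 2)" for m
  define c where "c = bisection_coeff q n"
  define g where "g k = (1 - q ^ k) * c k * s ^ Suc k * R (n - k)" for k
  have "s * even_bisection q n s + even_bisection q n (q * s)
      = (\<Sum>k\<le>n. s * (c k * s ^ k * R (n - k)) + c k * (q * s) ^ k * rsz (n - k) ((q * s) ^ 2) (q ^ 2))"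
    by (simp add: even_bisection_def R_def c_def sum_distrib_left sum.distrib)
  also have "\<dots> = (\<Sum>k\<le>n. (1 + s) * (q ^ k * c k * s ^ k * R (n - k)) + (g k - g (Suc k)))"
  proof (rule sum.cong[OF refl])
    fix k
    have "g (Suc k) = ((1 - q ^ Suc k) * c (Suc k)) * s ^ Suc (Suc k) * R (n - k - 1)"
      by (simp add: g_def)
    also have "\<dots> = q ^ k * c k * (1 - (q ^ 2) ^ (n - k)) * s ^ Suc (Suc k) * R (n - k - 1)"
      by (simp only: c_def bisection_coeff_Suc_right)
    finally show "s * (c k * s ^ k * R (n - k)) + c k * (q * s) ^ k * rsz (n - k) ((q * s) ^ 2) (q ^ 2)
        = (1 + s) * (q ^ k * c k * s ^ k * R (n - k)) + (g k - g (Suc k))"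
      unfolding rsz_square_dilate by (simp add: g_def R_def algebra_simps power_mult_distrib power2_eq_square)
  qed
  also have "\<dots> = (\<Sum>k\<le>n. (1 + s) * (q ^ k * c k * s ^ k * R (n - k)))"
    by (rule sum_add_telescope_vanishing) (simp_all add: g_def c_def bisection_coeff_eq_0)
  also have "\<dots> = (1 + s) * odd_bisection q n s"
    by (simp add: odd_bisection_def R_def c_def sum_distrib_left)
  finally show ?thesis .
qed

lemma odd_bisection_shift:
  "s * (1 + s) * odd_bisection q n s + (1 + q * s) * odd_bisection q n (q * s) = even_bisection q (Suc n) s"
proof -
  define R where "R m = rsz m (s ^ 2) (q ^ 2)" for m
  define c where "c = bisection_coeff q n"
  define X where "X k = q ^ k * q ^ k * c k * s ^ k * R (Suc n - k)" for k
  define Y where "Y k = (1 + q ^ Suc k) * q ^ k * c k * s ^ Suc k * R (n - k)" for k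
  define u where "u k = (q ^ k * c k - q ^ k * q ^ k * c k) * s ^ Suc (Suc k) * R (n - k)" for k
  have "s * (1 + s) * odd_bisection q n s + (1 + q * s) * odd_bisection q n (q * s)
      = (\<Sum>k\<le>n. s * (1 + s) * (q ^ k * c k * s ^ k * R (n - k))
           + (1 + q * s) * (q ^ k * c k * (q * s) ^ k * rsz (n - k) ((q * s) ^ 2) (q ^ 2)))"
    by (simp add: odd_bisection_def R_def c_def sum_distrib_left sum.distrib)
  also have "\<dots> = (\<Sum>k\<le>n. X k + Y k + (u k - u (Suc k)))"
  proof (rule sum.cong[OF refl])
    fix k assume "k \<in> {..n}"
    then have R_Suc: "R (Suc n - k) = (1 + s ^ 2) * R (n - k) - (1 - (q ^ 2) ^ (n - k)) * s ^ 2 * R (n - k - 1)"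
      by (simp add: R_def Suc_diff_le rsz_Suc_three_term[OF square_not_root_of_unity])
    have "u (Suc k) = q ^ Suc k * ((1 - q ^ Suc k) * c (Suc k)) * s ^ Suc (Suc (Suc k)) * R (n - k - 1)"
      by (simp add: u_def algebra_simps)
    also have "\<dots> = q ^ Suc k * q ^ k * c k * (1 - (q ^ 2) ^ (n - k)) * s ^ Suc (Suc (Suc k)) * R (n - k - 1)"
      by (simp only: c_def bisection_coeff_Suc_right) (simp add: algebra_simps)
    finally show "s * (1 + s) * (q ^ k * c k * s ^ k * R (n - k))
        + (1 + q * s) * (q ^ k * c k * (q * s) ^ k * rsz (n - k) ((q * s) ^ 2) (q ^ 2))
        = X k + Y k + (u k - u (Suc k))"
      unfolding rsz_square_dilate X_def R_Suc
      by (simp add: Y_def u_def R_def algebra_simps power_mult_distrib power2_eq_square)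
  qed
  also have "\<dots> = (\<Sum>k\<le>n. X k + Y k)"
    by (rule sum_add_telescope_vanishing) (simp_all add: u_def c_def bisection_coeff_eq_0)
  also have "\<dots> = (\<Sum>k\<le>Suc n. X k) + (\<Sum>k\<le>n. Y k)"
    by (simp add: sum.distrib X_def c_def bisection_coeff_eq_0)
  also have "\<dots> = X 0 + (\<Sum>k\<le>n. X (Suc k) + Y k)"
    by (simp only: sum.atMost_Suc_shift sum.distrib add.assoc)
  also have "(\<Sum>k\<le>n. X (Suc k) + Y k) = (\<Sum>k\<le>n. bisection_coeff q (Suc n) (Suc k) * s ^ Suc k * R (n - k))"
    by (rule sum.cong[OF refl])
      (simp add: X_def Y_def c_def bisection_coeff_Suc_Suc power2_power power2_eq_square algebra_simps)
  also have "X 0 + \<dots> = even_bisection q (Suc n) s"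
    by (simp only: even_bisection_def sum.atMost_Suc_shift) (simp add: X_def R_def c_def bisection_coeff_0)
  finally show ?thesis .
qed

lemma rsz_bisection:
  "rsz (2 * n) s q = even_bisection q n s \<and> rsz (2 * n + 1) s q = (1 + s) * odd_bisection q n s"
proof -
  have even: "rsz (2 * n) x q = even_bisection q n x" for x
  proof (induction n arbitrary: x)
    case 0
    show ?case by (simp add: rsz_0 even_bisection_def bisection_coeff_0)
  next
    case (Suc n)
    have odd: "rsz (Suc (2 * n)) y q = (1 + y) * odd_bisection q n y" for y
      using rsz_Suc[OF q_not_root_of_unity, of "2 * n" y] Suc.IH even_bisection_shift by simp
    have "rsz (2 * Suc n) x q = x * rsz (Suc (2 * n)) x q + rsz (Suc (2 * n)) (q * x) q"
      using rsz_Suc[OF q_not_root_of_unity] by simp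
    also have "\<dots> = even_bisection q (Suc n) x"
      unfolding odd using odd_bisection_shift[of x n] by (simp add: mult.assoc)
    finally show ?case .
  qed
  then show ?thesis
    using rsz_Suc[OF q_not_root_of_unity, of "2 * n" s] even_bisection_shift by simp
qed

end

lemma qind_power: "(qind :: 'a::idom poly fract) ^ j = Fract ([:0, 1:] ^ j) 1"
  by (induction j) (simp_all add: qind_def One_fract_def)

lemma qind_power_neq_one:
  assumes "0 < j"
  shows "(qind :: 'a::idom poly fract) ^ j \<noteq> 1"
proof
  assume "(qind :: 'a poly fract) ^ j = 1"
  then have "[:0, 1::'a:] ^ j = 1"
    by (simp add: qind_power One_fract_def eq_fract)
  then have "degree ([:0, 1::'a:] ^ j) = 0" by simp
  with assms show False by (simp add: degree_power_eq)
qed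

theorem corollary1p1:
  fixes s :: "'a::idom poly fract" and n :: nat
  shows "(rsz (2 * n) s qind =
           (\<Sum>k=0..n. qpoch (- qind) qind k * qind ^ (k choose 2) * s ^ k
              * qbinom (qind ^ 2) n k * rsz (n - k) (s ^ 2) (qind ^ 2))) \<and>
         (rsz (2 * n + 1) s qind =
           (1 + s) * (\<Sum>k=0..n. qpoch (- qind) qind k * qind ^ ((k + 1) choose 2) * s ^ k
              * qbinom (qind ^ 2) n k * rsz (n - k) (s ^ 2) (qind ^ 2)))"
proof -
  have "even_bisection qind n s = (\<Sum>k=0..n. qpoch (- qind) qind k * qind ^ (k choose 2) * s ^ k
      * qbinom (qind ^ 2) n k * rsz (n - k) (s ^ 2) (qind ^ 2))"
    unfolding even_bisection_def bisection_coeff_def atLeast0AtMost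
    by (simp add: algebra_simps)
  moreover have "odd_bisection qind n s = (\<Sum>k=0..n. qpoch (- qind) qind k * qind ^ ((k + 1) choose 2) * s ^ k
      * qbinom (qind ^ 2) n k * rsz (n - k) (s ^ 2) (qind ^ 2))"
    unfolding odd_bisection_def bisection_coeff_def atLeast0AtMost
    by (simp add: choose2_Suc power_add algebra_simps)
  ultimately show ?thesis
    using rsz_bisection[OF qind_power_neq_one, where n = n and s = s] by simp
qed

end
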